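(* For a function $\phi:[1]^m\to[1]^n$ the following are equivalent: (1) $\phi$ is a $\Delta_1[\tau,\gamma_-]^*$-morphism; (2) $\phi$ is an interval-preserving meet-semilattice homomorphism.
   Context: $[1]=\{0<1\}$; $[1]^n$ is the $n$-fold product poset with componentwise order ($[1]^0=[0]$ a point), a Boolean lattice with meet $\min$ and join $\max$ componentwise. An interval in a poset is a non-empty subset $[x,z]=\{y:x\leq y\leq z\}$; a function is interval-preserving if it maps intervals onto intervals. A meet-semilattice homomorphism preserves binary meets. Define $\tau:[1]^2\to[1]^2$, $\tau(x,y)=(y,x)$, and $\gamma_-:[1]^2\to[1]$, $\gamma_-(x,y)=\min(x,y)$. $\Delta_1[\tau,\gamma_-]^*$ denotes the smallest subcategory of $\mathbf{Set}$ containing all functions between $[0]$ and $[1]$, containing $\tau$ and $\gamma_-$, and closed under Cartesian products of functions ($f:[1]^a\to[1]^b$, $g:[1]^c\to[1]^d$ give $f\times g:[1]^{a+c}\to[1]^{b+d}$); its objects are the $[1]^n$. *)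

theory Defs
  imports Main
begin

text \<open>The poset [1]^n is represented as the set of boolean lists of length n,
  with False < True and componentwise order.\<close>

definition cube :: "nat \<Rightarrow> bool list set" where
  "cube n = {xs. length xs = n}"

definition cle :: "bool list \<Rightarrow> bool list \<Rightarrow> bool" where
  "cle xs ys = list_all2 (\<le>) xs ys"

definition cmeet :: "bool list \<Rightarrow> bool list \<Rightarrow> bool list" where
  "cmeet xs ys = map2 min xs ys"

definition interval :: "bool list \<Rightarrow> bool list \<Rightarrow> bool list set" where
  "interval x z = {y. cle x y \<and> cle y z}"

definition is_interval :: "nat \<Rightarrow> bool list set \<Rightarrow> bool" where
  "is_interval n S \<longleftrightarrow> (\<exists>x\<in>cube n. \<exists>z\<in>cube n. cle x z \<and> S = interval x z)"

definition interval_preserving :: "nat \<Rightarrow> nat \<Rightarrow> (bool list \<Rightarrow> bool list) \<Rightarrow> bool" where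
  "interval_preserving m n \<phi> \<longleftrightarrow>
     (\<forall>S. is_interval m S \<longrightarrow> is_interval n (\<phi> ` S))"

definition meet_hom :: "nat \<Rightarrow> (bool list \<Rightarrow> bool list) \<Rightarrow> bool" where
  "meet_hom m \<phi> \<longleftrightarrow>
     (\<forall>x\<in>cube m. \<forall>y\<in>cube m. \<phi> (cmeet x y) = cmeet (\<phi> x) (\<phi> y))"

definition tau :: "bool list \<Rightarrow> bool list" where
  "tau xs = [xs ! 1, xs ! 0]"

definition gamma_minus :: "bool list \<Rightarrow> bool list" where
  "gamma_minus xs = [min (xs ! 0) (xs ! 1)]"

definition fprod :: "nat \<Rightarrow> (bool list \<Rightarrow> bool list) \<Rightarrow> (bool list \<Rightarrow> bool list)
                      \<Rightarrow> bool list \<Rightarrow> bool list" where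
  "fprod a f g xs = f (take a xs) @ g (drop a xs)"

inductive D1gen :: "nat \<Rightarrow> nat \<Rightarrow> (bool list \<Rightarrow> bool list) \<Rightarrow> bool" where
  base: "\<lbrakk>m \<le> 1; n \<le> 1; \<forall>x\<in>cube m. f x \<in> cube n;
          \<forall>x\<in>cube m. \<forall>y\<in>cube m. cle x y \<longrightarrow> cle (f x) (f y)\<rbrakk> \<Longrightarrow> D1gen m n f"
| ident: "D1gen n n id"
| tau: "D1gen 2 2 tau"
| gamma: "D1gen 2 1 gamma_minus"
| comp: "\<lbrakk>D1gen l m f; D1gen m n g\<rbrakk> \<Longrightarrow> D1gen l n (g \<circ> f)"
| prod: "\<lbrakk>D1gen a b f; D1gen c d g\<rbrakk> \<Longrightarrow> D1gen (a + c) (b + d) (fprod a f g)"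

text \<open>A function [1]^m -> [1]^n (only its values on [1]^m matter) is a morphism
  of Delta_1[tau,gamma_-]^* if it agrees on [1]^m with a generated morphism.\<close>
definition D1_morphism :: "nat \<Rightarrow> nat \<Rightarrow> (bool list \<Rightarrow> bool list) \<Rightarrow> bool" where
  "D1_morphism m n \<phi> \<longleftrightarrow> (\<exists>f. D1gen m n f \<and> (\<forall>x\<in>cube m. \<phi> x = f x))"

end

theory Submission
  imports Defs "HOL-Library.Disjoint_Sets"
begin

text \<open>Every generator maps each interval [x, z] of its domain exactly onto [f x, f z] and
  preserves meets, and both properties survive composition and products. Conversely, a
  meet homomorphism \<phi> of cubes is determined coordinatewise by its values at the top
  element and at the coatoms: output j of \<phi> x is either constantly false or the conjunction
  of the inputs x_i for i in a set S_j. Preservation of the two-point intervals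
  [coatom_i, top] forces the S_j to be pairwise disjoint, and a map of this shape is built,
  by induction on the number of inputs, from constants, deletions, \<tau> (to route an input to
  its output) and \<gamma>_- (to meet it into that output).\<close>

lemma min_bool_iff [simp]: "min (a::bool) b \<longleftrightarrow> a \<and> b"
  by (cases a) simp_all

lemma mem_cube_iff [simp]: "x \<in> cube n \<longleftrightarrow> length x = n"
  by (simp add: cube_def)

lemma cle_iff_nth: "cle x y \<longleftrightarrow> length x = length y \<and> (\<forall>i<length x. x ! i \<le> y ! i)"
  by (simp add: cle_def list_all2_conv_all_nth)

lemma cle_length: "cle x y \<Longrightarrow> length x = length y"
  by (simp add: cle_iff_nth)

lemma cle_refl [simp]: "cle x x"
  by (simp add: cle_iff_nth)

lemma cle_trans: "cle x y \<Longrightarrow> cle y z \<Longrightarrow> cle x z"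
  by (auto simp: cle_iff_nth intro: order_trans)

lemma cle_Cons_Cons [simp]: "cle (a # x) (b # y) \<longleftrightarrow> a \<le> b \<and> cle x y"
  by (simp add: cle_def)

lemma cle_append:
  "length u = length u' \<Longrightarrow> cle (u @ v) (u' @ v') \<longleftrightarrow> cle u u' \<and> cle v v'"
  by (simp add: cle_def list_all2_append)

lemma cmeet_nth: "i < length x \<Longrightarrow> i < length y \<Longrightarrow> cmeet x y ! i = (x ! i \<and> y ! i)"
  by (simp add: cmeet_def)

lemma length_cmeet [simp]: "length (cmeet x y) = min (length x) (length y)"
  by (simp add: cmeet_def)

lemma cmeet_append:
  "length u = length u' \<Longrightarrow> cmeet (u @ v) (u' @ v') = cmeet u u' @ cmeet v v'"
  by (simp add: cmeet_def)

lemma take_cmeet: "take a (cmeet x y) = cmeet (take a x) (take a y)"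
  by (simp add: cmeet_def take_map take_zip)

lemma drop_cmeet: "drop a (cmeet x y) = cmeet (drop a x) (drop a y)"
  by (simp add: cmeet_def drop_map drop_zip)

lemma cle_cmeet_right: "length x = length y \<Longrightarrow> cle (cmeet x y) y"
  by (simp add: cle_iff_nth cmeet_nth)

lemma cmeet_eq_left: "cle x y \<Longrightarrow> cmeet x y = x"
  by (auto simp: cle_iff_nth cmeet_nth intro!: nth_equalityI)

lemma cmeet_eq_right: "cle y x \<Longrightarrow> cmeet x y = y"
  by (auto simp: cle_iff_nth cmeet_nth intro!: nth_equalityI)

lemma interval_length: "y \<in> interval x z \<Longrightarrow> length y = length x"
  by (auto simp: interval_def dest: cle_length)

lemma interval_append:
  assumes "length u = length u'"
  shows "interval (u @ v) (u' @ v') = {p @ q | p q. p \<in> interval u u' \<and> q \<in> interval v v'}"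
proof (intro set_eqI iffI)
  fix y assume "y \<in> interval (u @ v) (u' @ v')"
  then have "cle (u @ v) y" "cle y (u' @ v')" by (simp_all add: interval_def)
  moreover have "y = take (length u) y @ drop (length u) y" by simp
  moreover have "length (take (length u) y) = length u"
    using cle_length[OF \<open>cle (u @ v) y\<close>] by simp
  ultimately show "y \<in> {p @ q | p q. p \<in> interval u u' \<and> q \<in> interval v v'}"
    using assms by (metis (mono_tags, lifting) cle_append interval_def mem_Collect_eq)
next
  fix y assume "y \<in> {p @ q | p q. p \<in> interval u u' \<and> q \<in> interval v v'}"
  then show "y \<in> interval (u @ v) (u' @ v')"
    using assms by (auto simp: interval_def cle_append dest: cle_length)
qed

lemma interval_Nil [simp]: "interval [] [] = {[]}"
  by (auto simp: interval_def cle_def)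

lemma interval_Cons:
  "interval (a # x) (c # z) = {b # y | b y. a \<le> b \<and> b \<le> c \<and> y \<in> interval x z}"
proof (intro set_eqI iffI)
  fix w assume "w \<in> interval (a # x) (c # z)"
  then show "w \<in> {b # y | b y. a \<le> b \<and> b \<le> c \<and> y \<in> interval x z}"
    by (cases w) (auto simp: interval_def cle_def)
qed (auto simp: interval_def)

lemma interval_pair:
  "interval [a, b] [c, d] = {[p, q] | p q. a \<le> p \<and> p \<le> c \<and> b \<le> q \<and> q \<le> d}"
  by (auto simp: interval_Cons)

lemma interval_cube_le_1:
  assumes "length x \<le> 1" "cle x z" shows "interval x z = {x, z}"
proof (cases x)
  case Nil
  then show ?thesis using \<open>cle x z\<close> by (simp add: cle_def)
next
  case (Cons a x')
  then obtain c where "x = [a]" "z = [c]" "a \<le> c"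
    using \<open>length x \<le> 1\<close> \<open>cle x z\<close> by (cases z) (auto simp: cle_def)
  then show ?thesis by (auto simp: interval_Cons)
qed

lemma cle_total_cube_le_1: "length x \<le> 1 \<Longrightarrow> length y = length x \<Longrightarrow> cle x y \<or> cle y x"
  by (cases x; cases y) auto

lemma cube_2_cases:
  assumes "x \<in> cube 2" obtains a b where "x = [a, b]"
  using assms by (auto simp: numeral_2_eq_2 length_Suc_conv)

subsection \<open>Maps sending intervals exactly onto intervals\<close>

definition maps_intervals_exactly :: "nat \<Rightarrow> (bool list \<Rightarrow> bool list) \<Rightarrow> bool" where
  "maps_intervals_exactly m f \<longleftrightarrow>
     (\<forall>x\<in>cube m. \<forall>z\<in>cube m. cle x z \<longrightarrow> f ` interval x z = interval (f x) (f z))"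

lemma maps_intervals_exactly_tau: "maps_intervals_exactly 2 tau"
  unfolding maps_intervals_exactly_def
proof (intro ballI impI)
  fix x z :: "bool list" assume "x \<in> cube 2" "z \<in> cube 2"
  then obtain a b c d where "x = [a, b]" "z = [c, d]" by (metis cube_2_cases)
  moreover have "tau ` {[p, q] | p q. P p q} = {[q, p] | p q. P p q}" for P
  proof (intro set_eqI iffI)
    fix y assume "y \<in> {[q, p] | p q. P p q}"
    then obtain p q where "y = tau [p, q]" "P p q" by (auto simp: tau_def)
    then show "y \<in> tau ` {[p, q] | p q. P p q}" by blast
  qed (auto simp: tau_def)
  ultimately show "tau ` interval x z = interval (tau x) (tau z)"
    by (auto simp: tau_def interval_pair)
qed

lemma maps_intervals_exactly_gamma_minus: "maps_intervals_exactly 2 gamma_minus"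
  unfolding maps_intervals_exactly_def
proof (intro ballI impI)
  fix x z :: "bool list" assume "x \<in> cube 2" "z \<in> cube 2" "cle x z"
  then obtain a b c d where xz: "x = [a, b]" "z = [c, d]" by (metis cube_2_cases)
  with \<open>cle x z\<close> have "a \<le> c" "b \<le> d" by simp_all
  show "gamma_minus ` interval x z = interval (gamma_minus x) (gamma_minus z)"
  proof (intro set_eqI iffI)
    fix y assume "y \<in> gamma_minus ` interval x z"
    then obtain w where "w \<in> interval [a, b] [c, d]" "y = gamma_minus w"
      unfolding xz by blast
    then obtain p q where "w = [p, q]" "a \<le> p" "p \<le> c" "b \<le> q" "q \<le> d"
      unfolding interval_pair by blast
    moreover from this(1) \<open>y = gamma_minus w\<close> have "y = [p \<and> q]"
      by (simp add: gamma_minus_def)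
    ultimately show "y \<in> interval (gamma_minus x) (gamma_minus z)"
      unfolding xz by (simp add: gamma_minus_def interval_Cons)
  next
    fix y assume "y \<in> interval (gamma_minus x) (gamma_minus z)"
    then obtain r where r: "y = [r]" "(a \<and> b) \<le> r" "r \<le> (c \<and> d)"
      unfolding xz by (auto simp: gamma_minus_def interval_Cons)
    then have "y = gamma_minus (if r = (a \<and> b) then x else z)"
      unfolding xz by (auto simp: gamma_minus_def)
    moreover have "(if r = (a \<and> b) then x else z) \<in> interval x z"
      using \<open>cle x z\<close> by (simp add: interval_def)
    ultimately show "y \<in> gamma_minus ` interval x z" by (rule image_eqI)
  qed
qed

lemma maps_intervals_exactly_cube_le_1:
  assumes "m \<le> 1" "n \<le> 1" "\<forall>x\<in>cube m. f x \<in> cube n"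
    and "\<forall>x\<in>cube m. \<forall>y\<in>cube m. cle x y \<longrightarrow> cle (f x) (f y)"
  shows "maps_intervals_exactly m f"
  unfolding maps_intervals_exactly_def
proof (intro ballI impI)
  fix x z assume "x \<in> cube m" "z \<in> cube m" "cle x z"
  then have "interval x z = {x, z}" "interval (f x) (f z) = {f x, f z}"
    using assms by (simp_all add: interval_cube_le_1)
  then show "f ` interval x z = interval (f x) (f z)" by simp
qed

lemma maps_intervals_exactly_mono:
  assumes "maps_intervals_exactly m f" "x \<in> cube m" "z \<in> cube m" "cle x z"
  shows "cle (f x) (f z)"
proof -
  have "z \<in> interval x z" using \<open>cle x z\<close> by (simp add: interval_def)
  moreover have "f ` interval x z = interval (f x) (f z)"
    using assms by (simp add: maps_intervals_exactly_def)
  ultimately have "f z \<in> interval (f x) (f z)" by blast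
  then show ?thesis by (simp add: interval_def)
qed

lemma maps_intervals_exactly_comp:
  assumes f: "maps_intervals_exactly l f" and g: "maps_intervals_exactly m g"
    and f_cube: "\<forall>x\<in>cube l. f x \<in> cube m"
  shows "maps_intervals_exactly l (g \<circ> f)"
  unfolding maps_intervals_exactly_def
proof (intro ballI impI)
  fix x z assume xz: "x \<in> cube l" "z \<in> cube l" "cle x z"
  have "(g \<circ> f) ` interval x z = g ` (f ` interval x z)"
    by (simp add: image_comp)
  also have "\<dots> = g ` interval (f x) (f z)"
    using f xz by (simp add: maps_intervals_exactly_def)
  also have "\<dots> = interval (g (f x)) (g (f z))"
    using g f_cube xz maps_intervals_exactly_mono[OF f xz]
    by (simp add: maps_intervals_exactly_def)
  finally show "(g \<circ> f) ` interval x z = interval ((g \<circ> f) x) ((g \<circ> f) z)" by simp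
qed

lemma image_fprod_append:
  assumes "\<forall>p\<in>A. length p = a"
  shows "fprod a f g ` {p @ q | p q. p \<in> A \<and> q \<in> B} = {p @ q | p q. p \<in> f ` A \<and> q \<in> g ` B}"
proof (intro set_eqI iffI)
  fix y assume "y \<in> fprod a f g ` {p @ q | p q. p \<in> A \<and> q \<in> B}"
  then obtain p q where "p \<in> A" "q \<in> B" "y = fprod a f g (p @ q)" by blast
  then show "y \<in> {p @ q | p q. p \<in> f ` A \<and> q \<in> g ` B}"
    using assms by (auto simp: fprod_def)
next
  fix y assume "y \<in> {p @ q | p q. p \<in> f ` A \<and> q \<in> g ` B}"
  then obtain p q where "p \<in> A" "q \<in> B" "y = f p @ g q" by blast
  moreover from this have "y = fprod a f g (p @ q)" using assms by (simp add: fprod_def)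
  ultimately show "y \<in> fprod a f g ` {p @ q | p q. p \<in> A \<and> q \<in> B}" by blast
qed

lemma maps_intervals_exactly_fprod:
  assumes f: "maps_intervals_exactly a f" and g: "maps_intervals_exactly c g"
    and f_cube: "\<forall>x\<in>cube a. f x \<in> cube b"
  shows "maps_intervals_exactly (a + c) (fprod a f g)"
  unfolding maps_intervals_exactly_def
proof (intro ballI impI)
  fix x z assume xz: "x \<in> cube (a + c)" "z \<in> cube (a + c)" "cle x z"
  define x1 x2 z1 z2 where "x1 = take a x" "x2 = drop a x" "z1 = take a z" "z2 = drop a z"
  have split: "x = x1 @ x2" "z = z1 @ z2" by (simp_all add: x1_x2_z1_z2_def)
  have len: "x1 \<in> cube a" "z1 \<in> cube a" "x2 \<in> cube c" "z2 \<in> cube c"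
    using xz by (simp_all add: x1_x2_z1_z2_def)
  have le: "cle x1 z1" "cle x2 z2"
    using xz(3) len unfolding split by (simp_all add: cle_append)
  have "fprod a f g ` interval x z = {p @ q | p q. p \<in> f ` interval x1 z1 \<and> q \<in> g ` interval x2 z2}"
    unfolding split using len
    by (simp add: interval_append image_fprod_append interval_length)
  also have "\<dots> = interval (f x1 @ g x2) (f z1 @ g z2)"
    using f g len le f_cube by (simp add: maps_intervals_exactly_def interval_append)
  also have "\<dots> = interval (fprod a f g x) (fprod a f g z)"
    by (simp add: fprod_def x1_x2_z1_z2_def)
  finally show "fprod a f g ` interval x z = interval (fprod a f g x) (fprod a f g z)" .
qed

lemma meet_homD: "meet_hom m f \<Longrightarrow> x \<in> cube m \<Longrightarrow> y \<in> cube m \<Longrightarrow> f (cmeet x y) = cmeet (f x) (f y)"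
  by (simp add: meet_hom_def)

lemma meet_hom_mono:
  assumes "meet_hom m f" "\<forall>x\<in>cube m. f x \<in> cube n" "x \<in> cube m" "y \<in> cube m" "cle x y"
  shows "cle (f x) (f y)"
proof -
  have "f x = cmeet (f x) (f y)"
    using assms by (metis meet_homD cmeet_eq_left)
  then show ?thesis
    using assms by (metis cle_cmeet_right mem_cube_iff)
qed

lemma meet_hom_cube_le_1:
  assumes "m \<le> 1" "\<forall>x\<in>cube m. \<forall>y\<in>cube m. cle x y \<longrightarrow> cle (f x) (f y)"
  shows "meet_hom m f"
  unfolding meet_hom_def
proof (intro ballI)
  fix x y assume "x \<in> cube m" "y \<in> cube m"
  then show "f (cmeet x y) = cmeet (f x) (f y)"
    using assms cle_total_cube_le_1[of x y] by (auto simp: cmeet_eq_left cmeet_eq_right)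
qed

lemma meet_hom_tau: "meet_hom 2 tau"
  unfolding meet_hom_def by (auto elim!: cube_2_cases simp: tau_def cmeet_def)

lemma meet_hom_gamma_minus: "meet_hom 2 gamma_minus"
  unfolding meet_hom_def by (auto elim!: cube_2_cases simp: gamma_minus_def cmeet_def)

lemma meet_hom_comp:
  assumes "meet_hom l f" "meet_hom m g" "\<forall>x\<in>cube l. f x \<in> cube m"
  shows "meet_hom l (g \<circ> f)"
  using assms by (simp add: meet_hom_def)

lemma meet_hom_fprod:
  assumes f: "meet_hom a f" and g: "meet_hom c g" and f_cube: "\<forall>x\<in>cube a. f x \<in> cube b"
  shows "meet_hom (a + c) (fprod a f g)"
  unfolding meet_hom_def
proof (intro ballI)
  fix x y assume xy: "x \<in> cube (a + c)" "y \<in> cube (a + c)"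
  have "fprod a f g (cmeet x y) = f (cmeet (take a x) (take a y)) @ g (cmeet (drop a x) (drop a y))"
    by (simp add: fprod_def take_cmeet drop_cmeet)
  also have "\<dots> = cmeet (f (take a x)) (f (take a y)) @ cmeet (g (drop a x)) (g (drop a y))"
    using f g xy by (simp add: meet_hom_def)
  also have "\<dots> = cmeet (fprod a f g x) (fprod a f g y)"
    using f_cube xy by (simp add: fprod_def cmeet_append)
  finally show "fprod a f g (cmeet x y) = cmeet (fprod a f g x) (fprod a f g y)" .
qed

lemma maps_intervals_exactly_interval_preserving:
  assumes "maps_intervals_exactly m f" "\<forall>x\<in>cube m. f x \<in> cube n"
  shows "interval_preserving m n f"
  unfolding interval_preserving_def is_interval_def
proof (intro allI impI)
  fix S assume "\<exists>x\<in>cube m. \<exists>z\<in>cube m. cle x z \<and> S = interval x z"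
  then obtain x z where xz: "x \<in> cube m" "z \<in> cube m" "cle x z" and S: "S = interval x z"
    by blast
  then have "f ` S = interval (f x) (f z)"
    using assms(1) by (simp add: maps_intervals_exactly_def)
  moreover have "cle (f x) (f z)" using maps_intervals_exactly_mono[OF assms(1) xz] .
  ultimately show "\<exists>x'\<in>cube n. \<exists>z'\<in>cube n. cle x' z' \<and> f ` S = interval x' z'"
    using assms(2) xz by blast
qed

lemma interval_preserving_cong:
  assumes "\<forall>x\<in>cube m. f x = g x" "interval_preserving m n f"
  shows "interval_preserving m n g"
proof -
  have "f ` S = g ` S" if "is_interval m S" for S
    using that assms(1) by (auto simp: is_interval_def dest!: interval_length intro!: image_cong)
  then show ?thesis using assms(2) by (simp add: interval_preserving_def)
qed

lemma meet_hom_cong: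
  assumes "\<forall>x\<in>cube m. f x = g x" "meet_hom m f"
  shows "meet_hom m g"
  using assms by (simp add: meet_hom_def)

subsection \<open>Generated morphisms\<close>

lemma D1gen_maps_cube: "D1gen m n f \<Longrightarrow> \<forall>x\<in>cube m. f x \<in> cube n"
  by (induction rule: D1gen.induct) (auto simp: tau_def gamma_minus_def fprod_def)

lemma D1gen_maps_intervals_exactly: "D1gen m n f \<Longrightarrow> maps_intervals_exactly m f"
proof (induction rule: D1gen.induct)
  case (base m n f)
  then show ?case by (rule maps_intervals_exactly_cube_le_1)
next
  case (ident n)
  then show ?case by (simp add: maps_intervals_exactly_def)
next
  case (comp l m f n g)
  show ?case by (rule maps_intervals_exactly_comp[OF comp.IH D1gen_maps_cube[OF comp.hyps(1)]])
next
  case (prod a b f c d g)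
  show ?case by (rule maps_intervals_exactly_fprod[OF prod.IH D1gen_maps_cube[OF prod.hyps(1)]])
qed (simp_all add: maps_intervals_exactly_tau maps_intervals_exactly_gamma_minus)

lemma D1gen_meet_hom: "D1gen m n f \<Longrightarrow> meet_hom m f"
proof (induction rule: D1gen.induct)
  case (base m n f)
  then show ?case by (blast intro: meet_hom_cube_le_1)
next
  case (ident n)
  then show ?case by (simp add: meet_hom_def)
next
  case (comp l m f n g)
  show ?case by (rule meet_hom_comp[OF comp.IH D1gen_maps_cube[OF comp.hyps(1)]])
next
  case (prod a b f c d g)
  show ?case by (rule meet_hom_fprod[OF prod.IH D1gen_maps_cube[OF prod.hyps(1)]])
qed (simp_all add: meet_hom_tau meet_hom_gamma_minus)

lemma D1_morphism_cong:
  "D1_morphism m n f \<Longrightarrow> (\<And>x. x \<in> cube m \<Longrightarrow> f x = g x) \<Longrightarrow> D1_morphism m n g"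
  unfolding D1_morphism_def by metis

lemma D1_morphism_of_D1gen: "D1gen m n f \<Longrightarrow> D1_morphism m n f"
  unfolding D1_morphism_def by blast

lemma D1_morphism_id: "D1_morphism n n id"
  by (rule D1_morphism_of_D1gen) (rule D1gen.ident)

lemma D1_morphism_comp:
  assumes "D1_morphism l m f" "D1_morphism m n g"
  shows "D1_morphism l n (g \<circ> f)"
proof -
  obtain f' g' where "D1gen l m f'" "\<forall>x\<in>cube l. f x = f' x" "D1gen m n g'" "\<forall>y\<in>cube m. g y = g' y"
    using assms unfolding D1_morphism_def by blast
  moreover from this have "\<forall>x\<in>cube l. (g \<circ> f) x = (g' \<circ> f') x"
    using D1gen_maps_cube by fastforce
  ultimately show ?thesis
    unfolding D1_morphism_def using D1gen.comp by blast
qed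

lemma D1_morphism_fprod:
  assumes "D1_morphism a b f" "D1_morphism c d g"
  shows "D1_morphism (a + c) (b + d) (fprod a f g)"
proof -
  obtain f' g' where "D1gen a b f'" "\<forall>x\<in>cube a. f x = f' x" "D1gen c d g'" "\<forall>y\<in>cube c. g y = g' y"
    using assms unfolding D1_morphism_def by blast
  moreover from this have "\<forall>x\<in>cube (a + c). fprod a f g x = fprod a f' g' x"
    by (simp add: fprod_def)
  ultimately show ?thesis
    unfolding D1_morphism_def using D1gen.prod by blast
qed

lemma D1_morphism_const: "xs \<in> cube n \<Longrightarrow> D1_morphism 0 n (\<lambda>_. xs)"
proof (induction xs arbitrary: n)
  case Nil
  have "D1gen 0 0 (\<lambda>_. [])" by (rule D1gen.base) auto
  then show ?case using Nil by (simp add: D1_morphism_of_D1gen)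
next
  case (Cons b xs)
  have "D1gen 0 1 (\<lambda>_. [b])" by (rule D1gen.base) auto
  moreover have "D1_morphism 0 (length xs) (\<lambda>_. xs)" using Cons.IH by simp
  ultimately have "D1_morphism (0 + 0) (1 + length xs) (fprod 0 (\<lambda>_. [b]) (\<lambda>_. xs))"
    by (blast intro: D1_morphism_fprod D1_morphism_of_D1gen)
  then show ?case using Cons.prems by (simp add: fprod_def[abs_def])
qed

lemma D1_morphism_tl: "D1_morphism (Suc n) n tl"
proof -
  have "D1gen 1 0 (\<lambda>_. [])" by (rule D1gen.base) auto
  then have "D1_morphism (1 + n) (0 + n) (fprod 1 (\<lambda>_. []) id)"
    by (blast intro: D1_morphism_fprod D1_morphism_of_D1gen D1_morphism_id)
  then have "D1_morphism (Suc n) n (fprod 1 (\<lambda>_. []) id)" by simp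
  then show ?thesis by (rule D1_morphism_cong) (simp add: fprod_def drop_Suc)
qed

lemma D1_morphism_move_head:
  "j \<le> n \<Longrightarrow> D1_morphism (Suc n) (Suc n) (\<lambda>x. take j (tl x) @ hd x # drop j (tl x))"
proof (induction j arbitrary: n)
  case 0
  show ?case by (rule D1_morphism_cong[OF D1_morphism_id]) (auto simp: length_Suc_conv)
next
  case (Suc j)
  then obtain n' where n: "n = Suc n'" by (cases n) auto
  \<comment> \<open>swap the first two coordinates, then move the new second one into position j + 1\<close>
  have "D1_morphism (2 + n') (2 + n') (fprod 2 tau id)"
    using D1_morphism_fprod[OF D1_morphism_of_D1gen[OF D1gen.tau] D1_morphism_id] .
  moreover have "D1_morphism (1 + Suc n') (1 + Suc n') (fprod 1 id (\<lambda>x. take j (tl x) @ hd x # drop j (tl x)))"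
    using D1_morphism_fprod[OF D1_morphism_id[of 1] Suc.IH[of n']] Suc.prems n by simp
  ultimately have "D1_morphism (Suc n) (Suc n)
      (fprod 1 id (\<lambda>x. take j (tl x) @ hd x # drop j (tl x)) \<circ> fprod 2 tau id)"
    using D1_morphism_comp n by fastforce
  then show ?case
  proof (rule D1_morphism_cong)
    fix x :: "bool list" assume "x \<in> cube (Suc n)"
    then obtain b b' y where "x = b # b' # y" using n by (auto simp: length_Suc_conv)
    then show "(fprod 1 id (\<lambda>x. take j (tl x) @ hd x # drop j (tl x)) \<circ> fprod 2 tau id) x =
        take (Suc j) (tl x) @ hd x # drop (Suc j) (tl x)"
      by (simp add: fprod_def tau_def)
  qed
qed

lemma D1_morphism_meet_head_into:
  assumes "j < n"
  shows "D1_morphism (Suc n) n (\<lambda>x. (tl x)[j := (hd x \<and> tl x ! j)])"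
proof -
  define r where "r = n - Suc j"
  have n: "n = j + (1 + r)" using assms by (simp add: r_def)
  have "D1_morphism (j + (2 + r)) (j + (1 + r)) (fprod j id (fprod 2 gamma_minus id))"
    using D1_morphism_fprod[OF D1_morphism_id
        D1_morphism_fprod[OF D1_morphism_of_D1gen[OF D1gen.gamma] D1_morphism_id]] .
  then have "D1_morphism (Suc n) n
      (fprod j id (fprod 2 gamma_minus id) \<circ> (\<lambda>x. take j (tl x) @ hd x # drop j (tl x)))"
    using D1_morphism_comp[OF D1_morphism_move_head[of j n]] assms n by simp
  then show ?thesis
  proof (rule D1_morphism_cong)
    fix x :: "bool list" assume "x \<in> cube (Suc n)"
    then obtain b y where x: "x = b # y" and "length y = n" by (auto simp: length_Suc_conv)
    then have "drop j y = y ! j # drop (Suc j) y" using assms by (simp add: Cons_nth_drop_Suc)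
    then show "(fprod j id (fprod 2 gamma_minus id) \<circ> (\<lambda>x. take j (tl x) @ hd x # drop j (tl x))) x =
        (tl x)[j := (hd x \<and> tl x ! j)]"
      using assms \<open>length y = n\<close> by (simp add: x fprod_def gamma_minus_def upd_conv_take_nth_drop)
  qed
qed

definition conj_map :: "nat \<Rightarrow> (nat \<Rightarrow> bool) \<Rightarrow> (nat \<Rightarrow> nat set) \<Rightarrow> bool list \<Rightarrow> bool list" where
  "conj_map n c S x = map (\<lambda>j. c j \<and> (\<forall>i\<in>S j. x ! i)) [0..<n]"

lemma length_conj_map [simp]: "length (conj_map n c S x) = n"
  by (simp add: conj_map_def)

lemma nth_conj_map: "j < n \<Longrightarrow> conj_map n c S x ! j \<longleftrightarrow> c j \<and> (\<forall>i\<in>S j. x ! i)"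
  by (simp add: conj_map_def)

lemma nth_conj_map_Cons:
  assumes "j < n"
  shows "conj_map n c S (b # x) ! j \<longleftrightarrow> (0 \<in> S j \<longrightarrow> b) \<and> conj_map n c (\<lambda>j. Suc -` S j) x ! j"
proof -
  have "(\<forall>i\<in>S j. (b # x) ! i) \<longleftrightarrow> (0 \<in> S j \<longrightarrow> b) \<and> (\<forall>i\<in>Suc -` S j. x ! i)"
    by (metis nth_Cons_0 nth_Cons_Suc not0_implies_Suc vimage_eq)
  then show ?thesis using assms by (auto simp: nth_conj_map)
qed

lemma D1_morphism_conj_map:
  assumes "disjoint_family_on S {..<n}" "\<forall>j<n. S j \<subseteq> {..<m}"
  shows "D1_morphism m n (conj_map n c S)"
  using assms
proof (induction m arbitrary: S)
  case 0
  have "D1_morphism 0 n (\<lambda>_. map c [0..<n])" by (rule D1_morphism_const) simp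
  then show ?case
    by (rule D1_morphism_cong) (use 0 in \<open>auto simp: conj_map_def\<close>)
next
  case (Suc m)
  define S' where "S' = (\<lambda>j. Suc -` S j)"
  have "disjoint_family_on S' {..<n}"
    using Suc.prems(1) by (rule disjoint_family_on_bisimulation) (auto simp: S'_def)
  moreover have "\<forall>j<n. S' j \<subseteq> {..<m}" using Suc.prems(2) by (auto simp: S'_def)
  ultimately have IH: "D1_morphism m n (conj_map n c S')" by (rule Suc.IH)
  show ?case
  proof (cases "\<exists>j<n. 0 \<in> S j")
    case False
    have "D1_morphism (Suc m) n (conj_map n c S' \<circ> tl)"
      by (rule D1_morphism_comp[OF D1_morphism_tl IH])
    then show ?thesis
    proof (rule D1_morphism_cong)
      fix x :: "bool list" assume "x \<in> cube (Suc m)"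
      then obtain b y where "x = b # y" by (auto simp: length_Suc_conv)
      then show "(conj_map n c S' \<circ> tl) x = conj_map n c S x"
        using False by (auto intro!: nth_equalityI simp: nth_conj_map_Cons S'_def)
    qed
  next
    case True
    \<comment> \<open>by disjointness the first input feeds only output j\<close>
    then obtain j where j: "j < n" "0 \<in> S j" by blast
    have other: "0 \<notin> S k" if "k < n" "k \<noteq> j" for k
      using disjoint_family_onD[OF Suc.prems(1), of j k] j that by auto
    have "D1_morphism (1 + m) (1 + n) (fprod 1 id (conj_map n c S'))"
      by (rule D1_morphism_fprod[OF D1_morphism_id IH])
    then have "D1_morphism (Suc m) n ((\<lambda>x. (tl x)[j := (hd x \<and> tl x ! j)]) \<circ> fprod 1 id (conj_map n c S'))"
      using D1_morphism_comp D1_morphism_meet_head_into[OF j(1)] by fastforce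
    then show ?thesis
    proof (rule D1_morphism_cong)
      fix x :: "bool list" assume "x \<in> cube (Suc m)"
      then obtain b y where "x = b # y" by (auto simp: length_Suc_conv)
      then show "((\<lambda>x. (tl x)[j := (hd x \<and> tl x ! j)]) \<circ> fprod 1 id (conj_map n c S')) x =
          conj_map n c S x"
        using j other
        by (auto intro!: nth_equalityI simp: fprod_def nth_list_update nth_conj_map_Cons S'_def
            split: if_splits)
    qed
  qed
qed

subsection \<open>Normal form of interval-preserving meet homomorphisms\<close>

definition coatom :: "nat \<Rightarrow> nat \<Rightarrow> bool list" where
  "coatom m i = (replicate m True)[i := False]"

lemma length_coatom [simp]: "length (coatom m i) = m"
  by (simp add: coatom_def)

lemma cle_replicate_True: "x \<in> cube m \<Longrightarrow> cle x (replicate m True)"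
  by (simp add: cle_iff_nth)

lemma interval_coatom_top:
  assumes "i < m"
  shows "interval (coatom m i) (replicate m True) = {coatom m i, replicate m True}"
proof (intro set_eqI iffI)
  fix y assume "y \<in> interval (coatom m i) (replicate m True)"
  then have le: "cle (coatom m i) y" by (simp add: interval_def)
  then have len: "length y = m" using cle_length by fastforce
  have "\<forall>l<m. l \<noteq> i \<longrightarrow> y ! l"
    using le unfolding cle_iff_nth by (metis coatom_def length_coatom nth_list_update_neq nth_replicate le_boolD)
  then show "y \<in> {coatom m i, replicate m True}"
    using assms len by (cases "y ! i") (auto intro!: nth_equalityI simp: coatom_def nth_list_update)
qed (auto simp: interval_def cle_replicate_True)

lemma interval_subset: "u \<in> interval x z \<Longrightarrow> v \<in> interval x z \<Longrightarrow> interval u v \<subseteq> interval x z"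
  by (auto simp: interval_def intro: cle_trans)

lemma meet_hom_nth_meet_coatoms:
  assumes mh: "meet_hom m \<phi>" and cube: "\<forall>x\<in>cube m. \<phi> x \<in> cube n" and "j < n"
    and "F \<subseteq> {..<m}" "\<phi> (replicate m True) ! j" "\<forall>i\<in>F. \<phi> (coatom m i) ! j"
  shows "\<phi> (map (\<lambda>i. i \<notin> F) [0..<m]) ! j"
proof -
  have "finite F" using \<open>F \<subseteq> {..<m}\<close> finite_subset by blast
  then show ?thesis using assms(4-6)
  proof (induction F rule: finite_induct)
    case empty
    then show ?case by (simp add: map_replicate_const)
  next
    case (insert i F)
    have "map (\<lambda>l. l \<notin> insert i F) [0..<m] = cmeet (map (\<lambda>l. l \<notin> F) [0..<m]) (coatom m i)"
      by (auto intro!: nth_equalityI simp: cmeet_nth coatom_def nth_list_update)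
    then have "\<phi> (map (\<lambda>l. l \<notin> insert i F) [0..<m])
        = cmeet (\<phi> (map (\<lambda>l. l \<notin> F) [0..<m])) (\<phi> (coatom m i))"
      using meet_homD[OF mh] by simp
    then show ?case
      using insert cube \<open>j < n\<close> by (simp add: cmeet_nth)
  qed
qed

lemma meet_hom_nth_iff:
  assumes mh: "meet_hom m \<phi>" and cube: "\<forall>x\<in>cube m. \<phi> x \<in> cube n"
    and x: "x \<in> cube m" and "j < n"
  shows "\<phi> x ! j \<longleftrightarrow> \<phi> (replicate m True) ! j \<and> (\<forall>i<m. \<not> x ! i \<longrightarrow> \<phi> (coatom m i) ! j)"
proof
  have "\<phi> x ! j \<le> \<phi> y ! j" if "y \<in> cube m" "cle x y" for y
    using meet_hom_mono[OF mh cube x that] that cube \<open>j < n\<close> x by (simp add: cle_iff_nth)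
  moreover have "cle x (coatom m i)" if "i < m" "\<not> x ! i" for i
    using x that by (auto simp: cle_iff_nth coatom_def nth_list_update)
  ultimately show "\<phi> x ! j \<Longrightarrow> \<phi> (replicate m True) ! j \<and> (\<forall>i<m. \<not> x ! i \<longrightarrow> \<phi> (coatom m i) ! j)"
    using x cle_replicate_True by fastforce
next
  assume "\<phi> (replicate m True) ! j \<and> (\<forall>i<m. \<not> x ! i \<longrightarrow> \<phi> (coatom m i) ! j)"
  moreover have "x = map (\<lambda>i. i \<notin> {i. i < m \<and> \<not> x ! i}) [0..<m]"
    using x by (auto intro!: nth_equalityI)
  ultimately show "\<phi> x ! j"
    using meet_hom_nth_meet_coatoms[OF mh cube \<open>j < n\<close>, of "{i. i < m \<and> \<not> x ! i}"] by auto
qed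

lemma interval_preserving_coatom_nth:
  assumes ip: "interval_preserving m n \<phi>" and mh: "meet_hom m \<phi>"
    and cube: "\<forall>x\<in>cube m. \<phi> x \<in> cube n" and "i < m" "j < n" "k < n" "j \<noteq> k"
    and top: "\<phi> (replicate m True) ! j" "\<phi> (replicate m True) ! k"
  shows "\<phi> (coatom m i) ! j \<or> \<phi> (coatom m i) ! k"
proof (rule ccontr)
  let ?t = "replicate m True" and ?e = "coatom m i"
  assume "\<not> (\<phi> ?e ! j \<or> \<phi> ?e ! k)"
  have le: "cle ?e ?t" by (simp add: cle_replicate_True)
  \<comment> \<open>the image of the two-point interval [?e, ?t] is an interval containing \<phi> ?e and \<phi> ?t\<close>
  have "is_interval m (interval ?e ?t)"
    unfolding is_interval_def using le by (intro bexI[of _ ?e] bexI[of _ ?t]) simp_all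
  then have "is_interval n (\<phi> ` interval ?e ?t)"
    using ip by (simp add: interval_preserving_def)
  then obtain u v where uv: "\<phi> ` interval ?e ?t = interval u v"
    unfolding is_interval_def by blast
  have "interval (\<phi> ?e) (\<phi> ?t) \<subseteq> interval u v"
    using uv le by (intro interval_subset) (auto simp: interval_def[of ?e ?t])
  \<comment> \<open>so it contains \<phi> ?t with coordinate j switched off, which is neither \<phi> ?e nor \<phi> ?t\<close>
  moreover have "(\<phi> ?t)[j := False] \<in> interval (\<phi> ?e) (\<phi> ?t)"
    using meet_hom_mono[OF mh cube _ _ le] cube \<open>\<not> (\<phi> ?e ! j \<or> \<phi> ?e ! k)\<close> \<open>j < n\<close>
    by (auto simp: interval_def cle_iff_nth nth_list_update)
  ultimately have "(\<phi> ?t)[j := False] \<in> {\<phi> ?e, \<phi> ?t}"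
    using uv interval_coatom_top[OF \<open>i < m\<close>] by auto
  then show False
    using top \<open>\<not> (\<phi> ?e ! j \<or> \<phi> ?e ! k)\<close> \<open>j \<noteq> k\<close> cube \<open>j < n\<close>
    by (auto dest: arg_cong[where f = "\<lambda>x. x ! k"] arg_cong[where f = "\<lambda>x. x ! j"])
qed

lemma interval_preserving_meet_hom_conj_map:
  assumes ip: "interval_preserving m n \<phi>" and mh: "meet_hom m \<phi>"
    and cube: "\<forall>x\<in>cube m. \<phi> x \<in> cube n"
  obtains c S where "disjoint_family_on S {..<n}" "\<forall>j<n. S j \<subseteq> {..<m}"
    and "\<forall>x\<in>cube m. \<phi> x = conj_map n c S x"
proof
  let ?t = "replicate m True"
  define S where "S j = {i. i < m \<and> \<phi> ?t ! j \<and> \<not> \<phi> (coatom m i) ! j}" for j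
  show "disjoint_family_on S {..<n}"
    unfolding disjoint_family_on_def
  proof (intro ballI impI)
    fix j k assume "j \<in> {..<n}" "k \<in> {..<n}" "j \<noteq> k"
    then show "S j \<inter> S k = {}"
      using interval_preserving_coatom_nth[OF ip mh cube, of _ j k] by (auto simp: S_def)
  qed
  show "\<forall>j<n. S j \<subseteq> {..<m}" by (auto simp: S_def)
  show "\<forall>x\<in>cube m. \<phi> x = conj_map n (\<lambda>j. \<phi> ?t ! j) S x"
  proof (intro ballI nth_equalityI)
    fix x assume x: "x \<in> cube m"
    then show "length (\<phi> x) = length (conj_map n (\<lambda>j. \<phi> ?t ! j) S x)" using cube by simp
    fix j assume "j < length (\<phi> x)"
    then have "j < n" using cube x by simp
    then show "\<phi> x ! j = conj_map n (\<lambda>j. \<phi> ?t ! j) S x ! j"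
      using meet_hom_nth_iff[OF mh cube x] by (auto simp: nth_conj_map S_def)
  qed
qed

theorem mainTheorem3:
  fixes \<phi> :: "bool list \<Rightarrow> bool list" and m n :: nat
  assumes "\<forall>x\<in>cube m. \<phi> x \<in> cube n"
  shows "D1_morphism m n \<phi> \<longleftrightarrow> (interval_preserving m n \<phi> \<and> meet_hom m \<phi>)"
proof
  assume "D1_morphism m n \<phi>"
  then obtain f where f: "D1gen m n f" and "\<forall>x\<in>cube m. \<phi> x = f x"
    unfolding D1_morphism_def by blast
  then have f_\<phi>: "\<forall>x\<in>cube m. f x = \<phi> x" by simp
  have "interval_preserving m n f"
    using D1gen_maps_intervals_exactly[OF f] D1gen_maps_cube[OF f]
    by (rule maps_intervals_exactly_interval_preserving)
  moreover have "meet_hom m f" using f by (rule D1gen_meet_hom)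
  ultimately show "interval_preserving m n \<phi> \<and> meet_hom m \<phi>"
    using interval_preserving_cong[OF f_\<phi>] meet_hom_cong[OF f_\<phi>] by blast
next
  assume "interval_preserving m n \<phi> \<and> meet_hom m \<phi>"
  then obtain c S where "disjoint_family_on S {..<n}" "\<forall>j<n. S j \<subseteq> {..<m}"
      and \<phi>_conj: "\<forall>x\<in>cube m. \<phi> x = conj_map n c S x"
    using interval_preserving_meet_hom_conj_map assms by (elim conjE) metis
  then have "D1_morphism m n (conj_map n c S)" by (intro D1_morphism_conj_map)
  then show "D1_morphism m n \<phi>" by (rule D1_morphism_cong) (simp add: \<phi>_conj)
qed

end
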